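(* Let $Z_0, Z_1, Z_2 \in \{0,1\}^K$ be fixed products, and let $Y(Z_1,Z_0)$, $Y(Z_2,Z_0)$, $Y(Z_1,Z_2)$ be binary choice outcomes of a respondent generated by the random utility model described in the context. Then the conditional distribution of $Y(Z_1,Z_0) - Y(Z_2,Z_0)$ given the event $\{Y(Z_1,Z_0) \neq Y(Z_2,Z_0)\}$ equals the distribution of $2Y(Z_1,Z_2) - 1$; that is, $$Y(Z_1,Z_0) - Y(Z_2,Z_0) \,\big|\, \{Y(Z_1,Z_0) \neq Y(Z_2,Z_0)\} \ \stackrel{d}{=}\ 2Y(Z_1,Z_2) - 1 .$$
   Context: Products are binary vectors in $\{0,1\}^K$. For two products $A,B$, the choice outcome $Y(A,B)\in\{0,1\}$ equals $1$ if the respondent chooses $A$ over $B$ and $0$ if $B$ is chosen. Choices follow the random utility maximisation model: each product $Z$ has utility $U(Z)+\epsilon$, where $U:\{0,1\}^K\to\mathbb{R}$ is a deterministic (representative) utility and the noise terms are independent standard Gumbel (type I extreme value) random variables, drawn independently for each product in each comparison; the alternative with larger total utility is chosen. Consequently $P(Y(A,B)=1) = \frac{e^{U(A)}}{e^{U(A)}+e^{U(B)}}$, and the outcomes of distinct paired comparisons (here $Y(Z_1,Z_0)$ and $Y(Z_2,Z_0)$) are independent. *)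

theory Defs
  imports "HOL-Probability.Probability"
begin

text \<open>Products are binary vectors in {0,1}^K, rendered as functions from a finite
index type 'k (with K = CARD('k)) to bool.  Under the random utility model with
i.i.d. standard Gumbel noise, the probability that A is chosen over B is the
logit probability below.\<close>

definition choice_prob :: "(('k::finite \<Rightarrow> bool) \<Rightarrow> real) \<Rightarrow> ('k \<Rightarrow> bool) \<Rightarrow> ('k \<Rightarrow> bool) \<Rightarrow> real" where
  "choice_prob U A B = exp (U A) / (exp (U A) + exp (U B))"

end

theory Submission
  imports Defs
begin

text \<open>Given that the two comparisons with the reference product Z0 disagree, the outcome is
(1,0) or (0,1) with probabilities proportional to p10 p02 and p01 p20, where pij is the logit
probability of choosing Zi over Zj. In the logit model the ratio of these two weights is
exp (U Z1) / exp (U Z2): the reference Z0 cancels, so the conditional law is exactly the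
law of the direct comparison of Z1 with Z2.\<close>

lemma choice_prob_complement: "1 - choice_prob U A B = choice_prob U B A"
proof -
  have "exp (U A) + exp (U B) > 0" by (simp add: add_pos_pos)
  then show ?thesis unfolding choice_prob_def by (simp add: field_simps)
qed

lemma choice_prob_via_common_alternative:
  "choice_prob U A C * (1 - choice_prob U B C)
     / (choice_prob U A C * (1 - choice_prob U B C) + (1 - choice_prob U A C) * choice_prob U B C)
   = choice_prob U A B"
proof -
  define a b c where "a = exp (U A)" and "b = exp (U B)" and "c = exp (U C)"
  define d where "d = (a + c) * (b + c)"
  have pos: "a > 0" "b > 0" "c > 0" "d > 0"
    unfolding a_def b_def c_def d_def by (simp_all add: add_pos_pos)
  have "a / (a + c) * (c / (c + b)) / (a / (a + c) * (c / (c + b)) + c / (c + a) * (b / (b + c)))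
        = (a * c / d) / (a * c / d + b * c / d)"
    by (simp add: d_def algebra_simps)
  also have "\<dots> = (a * c) / (a * c + b * c)"
    using pos by (simp add: add_divide_distrib[symmetric])
  also have "\<dots> = a / (a + b)"
    using pos by (simp add: distrib_right[symmetric])
  finally show ?thesis
    unfolding choice_prob_complement unfolding choice_prob_def a_def b_def c_def .
qed

lemma (in prob_space) prob_indicator_eq_0:
  fixes X :: "'a \<Rightarrow> int"
  assumes "X \<in> measurable M (count_space UNIV)" and "\<forall>\<omega>\<in>space M. X \<omega> \<in> {0, 1}"
  shows "\<P>(\<omega> in M. X \<omega> = 0) = 1 - \<P>(\<omega> in M. X \<omega> = 1)"
proof -
  have "\<P>(\<omega> in M. X \<omega> = 0) = \<P>(\<omega> in M. \<not> X \<omega> = 1)"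
    using assms(2) by (intro arg_cong[where f=prob]) auto
  also have "\<dots> = 1 - \<P>(\<omega> in M. X \<omega> = 1)"
    using assms(1) by (intro prob_neg) measurable
  finally show ?thesis .
qed

lemma (in prob_space) cond_prob_diff_of_indep_indicators:
  fixes X Y :: "'a \<Rightarrow> int"
  assumes X: "X \<in> measurable M (count_space UNIV)" "\<forall>\<omega>\<in>space M. X \<omega> \<in> {0, 1}"
      "\<P>(\<omega> in M. X \<omega> = 1) = p"
    and Y: "Y \<in> measurable M (count_space UNIV)" "\<forall>\<omega>\<in>space M. Y \<omega> \<in> {0, 1}"
      "\<P>(\<omega> in M. Y \<omega> = 1) = r"
    and indep: "indep_var (count_space UNIV) X (count_space UNIV) Y"
  shows "\<P>(\<omega> in M. X \<omega> - Y \<omega> = 1 \<bar> X \<omega> \<noteq> Y \<omega>) = p * (1 - r) / (p * (1 - r) + (1 - p) * r)"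
    and "\<P>(\<omega> in M. X \<omega> - Y \<omega> = -1 \<bar> X \<omega> \<noteq> Y \<omega>) = r * (1 - p) / (r * (1 - p) + (1 - r) * p)"
proof -
  have joint: "\<P>(\<omega> in M. X \<omega> = a \<and> Y \<omega> = b) = \<P>(\<omega> in M. X \<omega> = a) * \<P>(\<omega> in M. Y \<omega> = b)"
    for a b
    using prob_indep_random_variable[OF indep, of "{a}" "{b}"] by simp
  have X0: "\<P>(\<omega> in M. X \<omega> = 0) = 1 - p" and Y0: "\<P>(\<omega> in M. Y \<omega> = 0) = 1 - r"
    using prob_indicator_eq_0 X Y by simp_all
  have "\<P>(\<omega> in M. X \<omega> \<noteq> Y \<omega>)
        = prob ({\<omega> \<in> space M. X \<omega> = 1 \<and> Y \<omega> = 0} \<union> {\<omega> \<in> space M. X \<omega> = 0 \<and> Y \<omega> = 1})"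
    using X(2) Y(2) by (intro arg_cong[where f=prob]) fastforce
  also have "\<dots> = \<P>(\<omega> in M. X \<omega> = 1 \<and> Y \<omega> = 0) + \<P>(\<omega> in M. X \<omega> = 0 \<and> Y \<omega> = 1)"
    using X(1) Y(1) by (intro finite_measure_Union) auto
  finally have disagree: "\<P>(\<omega> in M. X \<omega> \<noteq> Y \<omega>) = p * (1 - r) + (1 - p) * r"
    using joint X(3) Y(3) X0 Y0 by simp
  have "\<P>(\<omega> in M. X \<omega> - Y \<omega> = 1 \<and> X \<omega> \<noteq> Y \<omega>) = \<P>(\<omega> in M. X \<omega> = 1 \<and> Y \<omega> = 0)"
    using X(2) Y(2) by (intro arg_cong[where f=prob]) fastforce
  with disagree show "\<P>(\<omega> in M. X \<omega> - Y \<omega> = 1 \<bar> X \<omega> \<noteq> Y \<omega>) = p * (1 - r) / (p * (1 - r) + (1 - p) * r)"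
    using joint X(3) Y0 by (simp add: cond_prob_def)
  have "\<P>(\<omega> in M. X \<omega> - Y \<omega> = -1 \<and> X \<omega> \<noteq> Y \<omega>) = \<P>(\<omega> in M. X \<omega> = 0 \<and> Y \<omega> = 1)"
    using X(2) Y(2) by (intro arg_cong[where f=prob]) fastforce
  also have "\<dots> = r * (1 - p)"
    using joint X0 Y(3) by simp
  finally show "\<P>(\<omega> in M. X \<omega> - Y \<omega> = -1 \<bar> X \<omega> \<noteq> Y \<omega>) = r * (1 - p) / (r * (1 - p) + (1 - r) * p)"
    using disagree by (simp add: cond_prob_def ac_simps)
qed

theorem lemma2:
  fixes M :: "'a measure"
    and U :: "('k::finite \<Rightarrow> bool) \<Rightarrow> real"
    and Z0 Z1 Z2 :: "'k \<Rightarrow> bool"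
    and Y10 Y20 Y12 :: "'a \<Rightarrow> int"
  assumes "prob_space M"
    and "Y10 \<in> measurable M (count_space UNIV)"
    and "Y20 \<in> measurable M (count_space UNIV)"
    and "Y12 \<in> measurable M (count_space UNIV)"
    and "\<forall>\<omega>\<in>space M. Y10 \<omega> \<in> {0, 1}"
    and "\<forall>\<omega>\<in>space M. Y20 \<omega> \<in> {0, 1}"
    and "\<forall>\<omega>\<in>space M. Y12 \<omega> \<in> {0, 1}"
    and "\<P>(\<omega> in M. Y10 \<omega> = 1) = choice_prob U Z1 Z0"
    and "\<P>(\<omega> in M. Y20 \<omega> = 1) = choice_prob U Z2 Z0"
    and "\<P>(\<omega> in M. Y12 \<omega> = 1) = choice_prob U Z1 Z2"
    and "prob_space.indep_var M (count_space UNIV) Y10 (count_space UNIV) Y20"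
  shows "\<forall>v::int. \<P>(\<omega> in M. Y10 \<omega> - Y20 \<omega> = v \<bar> Y10 \<omega> \<noteq> Y20 \<omega>)
                  = \<P>(\<omega> in M. 2 * Y12 \<omega> - 1 = v)"
proof
  fix v :: int
  interpret prob_space M by fact
  note cond = cond_prob_diff_of_indep_indicators[OF assms(2,5,8,3,6,9,11)]
  consider "v = 1" | "v = -1" | "v \<noteq> 1" "v \<noteq> -1" by blast
  then show "\<P>(\<omega> in M. Y10 \<omega> - Y20 \<omega> = v \<bar> Y10 \<omega> \<noteq> Y20 \<omega>) = \<P>(\<omega> in M. 2 * Y12 \<omega> - 1 = v)"
  proof cases
    case 1
    have "\<P>(\<omega> in M. 2 * Y12 \<omega> - 1 = v) = \<P>(\<omega> in M. Y12 \<omega> = 1)"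
      using 1 by (intro arg_cong[where f=prob]) auto
    with 1 show ?thesis
      using cond(1) assms(10) by (simp only: choice_prob_via_common_alternative)
  next
    case 2
    have "\<P>(\<omega> in M. 2 * Y12 \<omega> - 1 = v) = \<P>(\<omega> in M. Y12 \<omega> = 0)"
      using 2 by (intro arg_cong[where f=prob]) auto
    also have "\<dots> = choice_prob U Z2 Z1"
      using prob_indicator_eq_0[OF assms(4,7)] assms(10) by (simp add: choice_prob_complement)
    finally show ?thesis
      using 2 cond(2) by (simp only: choice_prob_via_common_alternative)
  next
    case 3
    have "{\<omega> \<in> space M. Y10 \<omega> - Y20 \<omega> = v \<and> Y10 \<omega> \<noteq> Y20 \<omega>} = {}"
      using assms(5,6) 3 by fastforce
    moreover have "{\<omega> \<in> space M. 2 * Y12 \<omega> - 1 = v} = {}"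
      using assms(7) 3 by fastforce
    ultimately show ?thesis by (simp only: cond_prob_def) simp
  qed
qed

end
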